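(* Let $d\le k$ and let $R$ be a $d\times k$ matrix that is weakly completely-$\mathcal S$ with respect to $f:\{1,\dots,k\}\to\mathcal P(\{1,\dots,d\})$, where $f(j)\ne\emptyset$ for all $j$ and, for each $1\le i\le d$, $f(j)=\{i\}$ iff $j=i$. Then there is a constant $C>0$ depending only on $R$ and $f$ such that the following holds. Whenever $\delta>0$, $0\le t_1<t_2<\infty$, $w,x\in C([t_1,t_2],\mathbb R^d)$ and $y\in C([t_1,t_2],\mathbb R^k)$ satisfy (i) $w(t)=x(t)+Ry(t)$ for all $t\in[t_1,t_2]$; (ii) $w(t)\in\mathbb R^d_{\ge0}$ for all $t\in[t_1,t_2]$; (iii) for each $j$: $y_j(t_1)\ge0$, $y_j$ is nondecreasing, and $\int_{t_1}^{t_2}\mathbf 1(w_i(s)>\delta\text{ for some }i\in f(j))\,dy_j(s)=0$; then $$\mathrm{Osc}(y,[t_1,t_2])\le C\big(\mathrm{Osc}(x,[t_1,t_2])+\delta\big),\qquad \mathrm{Osc}(w,[t_1,t_2])\le C\big(\mathrm{Osc}(x,[t_1,t_2])+\delta\big).$$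
   Context: For $g\in C([t_1,t_2],\mathbb R^m)$, $\mathrm{Osc}(g,[t_1,t_2])=\sup\{\max_{1\le l\le m}|g_l(t)-g_l(s)|: t_1\le s<t\le t_2\}$. Weakly completely-$\mathcal S$: for a $d\times k$ matrix $R$ and $f:\{1,\dots,k\}\to\mathcal P(\{1,\dots,d\})$, for nonempty $I\subseteq\{1,\dots,d\}$ set $J_I=\{1\le j\le k: f(j)\subseteq I\}$ and $R_I=R_{I,J_I}$; $R$ is weakly completely-$\mathcal S$ w.r.t. $f$ if for every nonempty $I$ there is $\lambda_I\in\mathbb R^I_{>0}$ with $(\lambda_I^\top R_I)_j\ge1$ for all $j\in J_I$. *)

theory Defs
  imports "HOL-Analysis.Analysis"
begin

text \<open>Indices are 0-based: coordinates i < d, columns j < k.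
  Matrices are functions nat => nat => real, vector-valued paths are real => nat => real.\<close>

text \<open>Oscillation of a path g with m coordinates on [t1,t2]
  (the extra 0 only matters for m = 0, making Osc = 0 then).\<close>
definition Osc :: "(real \<Rightarrow> nat \<Rightarrow> real) \<Rightarrow> nat \<Rightarrow> real \<Rightarrow> real \<Rightarrow> real" where
  "Osc g m t1 t2 = Sup (insert 0 {\<bar>g t l - g s l\<bar> | s t l. t1 \<le> s \<and> s < t \<and> t \<le> t2 \<and> l < m})"

definition J_set :: "nat \<Rightarrow> (nat \<Rightarrow> nat set) \<Rightarrow> nat set \<Rightarrow> nat set" where
  "J_set k f I = {j. j < k \<and> f j \<subseteq> I}"

definition weakly_completely_S ::
  "nat \<Rightarrow> nat \<Rightarrow> (nat \<Rightarrow> nat \<Rightarrow> real) \<Rightarrow> (nat \<Rightarrow> nat set) \<Rightarrow> bool" where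
  "weakly_completely_S d k R f \<longleftrightarrow>
     (\<forall>I. I \<noteq> {} \<and> I \<subseteq> {..<d} \<longrightarrow>
        (\<exists>lam::nat \<Rightarrow> real. (\<forall>i\<in>I. lam i > 0) \<and>
           (\<forall>j\<in>J_set k f I. (\<Sum>i\<in>I. lam i * R i j) \<ge> 1)))"

definition LS_measure :: "(real \<Rightarrow> real) \<Rightarrow> real \<Rightarrow> real \<Rightarrow> real measure" where
  "LS_measure g t1 t2 = interval_measure (\<lambda>s. g (max t1 (min t2 s)))"

end

theory Submission
  imports Defs
begin

text \<open>For \<open>I \<subseteq> {0..<d}\<close>, consider time intervals on which only the \<open>y\<^sub>j\<close> with
  \<open>f j \<subseteq> I\<close> increase. By induction on \<open>I\<close>, the total increase \<open>\<Sum>\<^sub>j \<Delta>y\<^sub>j\<close> over such an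
  interval is at most \<open>C\<^sub>I (Osc x + \<delta>)\<close>. Let \<open>C'\<close> bound the constants of the sets \<open>I - {i}\<close>
  and \<open>M = 3 + \<parallel>R\<parallel> C'\<close>. Split the interval at a time \<open>a\<close> at which all \<open>w\<^sub>i\<close>, \<open>i \<in> I\<close>, are
  at most \<open>M (Osc x + \<delta>)\<close> and some \<open>w\<^sub>i\<close> is at least that level (unless \<open>a\<close> is an endpoint).
  Up to \<open>a\<close>, pairing \<open>w = x + R y\<close> with the vector \<open>\<lambda>\<^sub>I\<close> of the completely-\<open>\<S>\<close> condition
  bounds the increase by \<open>\<Sum>\<^sub>i \<lambda>\<^sub>i w\<^sub>i(a)\<close>. After \<open>a\<close>, as long as \<open>w\<^sub>i > \<delta>\<close> the \<open>y\<^sub>j\<close> with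
  \<open>i \<in> f j\<close> cannot increase, so the bound for \<open>I - {i}\<close> applies; it shows that \<open>w\<^sub>i\<close> falls
  by at most \<open>(1 + \<parallel>R\<parallel> C') (Osc x + \<delta>)\<close>, too little to reach \<open>\<delta>\<close>. The bound on \<open>Osc w\<close>
  then follows from \<open>w = x + R y\<close>.\<close>

section \<open>Oscillation\<close>

lemma bdd_above_Osc_set:
  fixes g :: "real \<Rightarrow> nat \<Rightarrow> real"
  assumes "\<forall>l<m. continuous_on {t1..t2} (\<lambda>t. g t l)"
  shows "bdd_above (insert 0 {\<bar>g t l - g s l\<bar> | s t l. t1 \<le> s \<and> s < t \<and> t \<le> t2 \<and> l < m})"
proof -
  have "\<exists>B. \<forall>t\<in>{t1..t2}. \<bar>g t l\<bar> \<le> B" if "l < m" for l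
    using compact_imp_bounded[OF compact_continuous_image[OF assms[rule_format, OF that] compact_Icc]]
    unfolding bounded_real by auto
  then obtain B where B: "\<And>l t. l < m \<Longrightarrow> t \<in> {t1..t2} \<Longrightarrow> \<bar>g t l\<bar> \<le> B l"
    by metis
  have bound: "\<bar>g t l\<bar> \<le> (\<Sum>l<m. \<bar>B l\<bar>)" if "l < m" "t \<in> {t1..t2}" for l t
    using B[OF that] member_le_sum[of l "{..<m}" "\<lambda>l. \<bar>B l\<bar>"] that by force
  show ?thesis
  proof (intro bdd_aboveI[of _ "2 * (\<Sum>l<m. \<bar>B l\<bar>)"], elim insertE CollectE exE conjE)
    fix z s t l
    assume "z = \<bar>g t l - g s l\<bar>" "t1 \<le> s" "s < t" "t \<le> t2" "l < m"
    then show "z \<le> 2 * (\<Sum>l<m. \<bar>B l\<bar>)"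
      using bound[of l s] bound[of l t] by auto
  qed (auto intro: sum_nonneg)
qed

lemma Osc_nonneg:
  fixes g :: "real \<Rightarrow> nat \<Rightarrow> real"
  assumes "\<forall>l<m. continuous_on {t1..t2} (\<lambda>t. g t l)"
  shows "0 \<le> Osc g m t1 t2"
  unfolding Osc_def by (rule cSup_upper[OF _ bdd_above_Osc_set[OF assms]]) simp

lemma abs_diff_le_Osc:
  fixes g :: "real \<Rightarrow> nat \<Rightarrow> real"
  assumes cont: "\<forall>l<m. continuous_on {t1..t2} (\<lambda>t. g t l)"
    and "u \<in> {t1..t2}" "v \<in> {t1..t2}" "l < m"
  shows "\<bar>g u l - g v l\<bar> \<le> Osc g m t1 t2"
proof -
  have less: "\<bar>g t l - g s l\<bar> \<le> Osc g m t1 t2" if "t1 \<le> s" "s < t" "t \<le> t2" for s t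
    unfolding Osc_def by (rule cSup_upper[OF _ bdd_above_Osc_set[OF cont]]) (use that assms in blast)
  consider "u < v" | "u = v" | "v < u" by linarith
  then show ?thesis
    using less[of u v] less[of v u] Osc_nonneg[OF cont] assms by cases (auto simp: abs_minus_commute)
qed

lemma Osc_least:
  fixes g :: "real \<Rightarrow> nat \<Rightarrow> real"
  assumes "\<And>s t l. t1 \<le> s \<Longrightarrow> s < t \<Longrightarrow> t \<le> t2 \<Longrightarrow> l < m \<Longrightarrow> \<bar>g t l - g s l\<bar> \<le> B"
    and "0 \<le> B"
  shows "Osc g m t1 t2 \<le> B"
  unfolding Osc_def by (rule cSup_least) (use assms in auto)

section \<open>Hitting times of continuous functions\<close>

lemma first_hitting_time:
  fixes h :: "real \<Rightarrow> real"
  assumes cont: "continuous_on {a..b} h" and "s \<in> {a..b}" "h s \<le> c"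
  shows "\<exists>s0\<in>{a..b}. h s0 \<le> c \<and> (\<forall>u. a < u \<longrightarrow> u < s0 \<longrightarrow> c < h u)"
proof -
  define T where "T = {u\<in>{a..b}. h u \<le> c}"
  have "closed T"
    unfolding T_def by (rule continuous_on_closed_Collect_le[OF cont continuous_on_const]) auto
  moreover have "T \<noteq> {}" "bdd_below T"
    using assms unfolding T_def by (auto intro: bdd_belowI[of _ a])
  ultimately have "Inf T \<in> T"
    by (rule closed_contains_Inf[rotated 2])
  moreover have "c < h u" if "a < u" "u < Inf T" for u
    using cInf_lower[OF _ \<open>bdd_below T\<close>, of u] that \<open>Inf T \<in> T\<close> unfolding T_def by force
  ultimately show ?thesis
    unfolding T_def by blast
qed

lemma continuous_on_Max_image:
  fixes g :: "'i \<Rightarrow> 'a::topological_space \<Rightarrow> real"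
  assumes "finite I" "I \<noteq> {}" "\<And>i. i \<in> I \<Longrightarrow> continuous_on S (g i)"
  shows "continuous_on S (\<lambda>u. Max ((\<lambda>i. g i u) ` I))"
  using assms by (induction I rule: finite_ne_induct) (auto intro!: continuous_intros)

lemma crossing_time:
  fixes g :: "'i \<Rightarrow> real \<Rightarrow> real"
  assumes "finite I" "\<And>i. i \<in> I \<Longrightarrow> continuous_on {s..t} (g i)" "s \<le> t"
  shows "\<exists>a\<in>{s..t}. (a = s \<or> (\<forall>i\<in>I. g i a \<le> c)) \<and> (a = t \<or> (\<exists>i\<in>I. c \<le> g i a))"
proof (cases "I = {}")
  case True
  then show ?thesis using \<open>s \<le> t\<close> by auto
next
  case False
  define h where "h u = Max ((\<lambda>i. g i u) ` I)" for u
  have h_le: "h u \<le> c \<longleftrightarrow> (\<forall>i\<in>I. g i u \<le> c)" and le_h: "c \<le> h u \<longleftrightarrow> (\<exists>i\<in>I. c \<le> g i u)" for u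
    unfolding h_def using \<open>finite I\<close> False by (auto simp: Max_le_iff Max_ge_iff)
  consider "c \<le> h s" | "h t \<le> c" | "h s \<le> c" "c \<le> h t" by linarith
  then show ?thesis
  proof cases
    case 3
    moreover have "continuous_on {s..t} h"
      unfolding h_def using assms False by (intro continuous_on_Max_image)
    ultimately obtain a where "s \<le> a" "a \<le> t" "h a = c"
      using IVT'[of h s c t] \<open>s \<le> t\<close> by blast
    then show ?thesis using h_le[of a] le_h[of a] by (intro bexI[of _ a]) auto
  qed (use h_le le_h \<open>s \<le> t\<close> in auto)
qed

section \<open>Lebesgue--Stieltjes null sets\<close>

lemma LS_measure_null_imp_eq:
  fixes g :: "real \<Rightarrow> real"
  assumes cont: "continuous_on {t1..t2} g" and mono: "mono_on {t1..t2} g"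
    and ab: "t1 \<le> a" "a \<le> b" "b \<le> t2"
    and null: "(\<integral>\<^sup>+ s. indicator A s \<partial>LS_measure g t1 t2) = 0" and sub: "{a<..<b} \<subseteq> A"
  shows "g b = g a"
proof -
  define F where "F s = g (max t1 (min t2 s))" for s
  have F_cont: "continuous_on UNIV F"
    unfolding F_def by (rule continuous_on_compose2[OF cont]) (use ab in \<open>auto intro!: continuous_intros\<close>)
  have F_mono: "F u \<le> F v" if "u \<le> v" for u v
    unfolding F_def using ab that by (intro mono_onD[OF mono]) auto
  have F_right_cont: "continuous (at_right u) F" for u
    using F_cont by (simp add: continuous_on_eq_continuous_within continuous_at_imp_continuous_at_within)
  let ?\<mu> = "interval_measure F"
  have "emeasure ?\<mu> {a<..<b} = (\<integral>\<^sup>+ s. indicator {a<..<b} s \<partial>?\<mu>)"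
    by simp
  also have "\<dots> \<le> (\<integral>\<^sup>+ s. indicator A s \<partial>?\<mu>)"
    by (rule nn_integral_mono) (use sub in \<open>auto split: split_indicator\<close>)
  also have "\<dots> = 0"
    using null unfolding LS_measure_def F_def .
  finally have open_null: "emeasure ?\<mu> {a<..<b} = 0" by simp
  have point_null: "emeasure ?\<mu> {b} = 0"
    using emeasure_interval_measure_Icc[of b b F] F_mono F_cont by simp
  have "ennreal (F b - F a) = emeasure ?\<mu> {a<..b}"
    using emeasure_interval_measure_Ioc[of a b F] F_mono F_right_cont ab by simp
  also have "\<dots> \<le> emeasure ?\<mu> ({a<..<b} \<union> {b})"
    by (rule emeasure_mono) auto
  also have "\<dots> \<le> emeasure ?\<mu> {a<..<b} + emeasure ?\<mu> {b}"
    by (rule emeasure_subadditive) auto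
  finally have "F b \<le> F a"
    using open_null point_null ennreal_eq_0_iff by (simp add: ennreal_le_iff2)
  moreover have "g a \<le> g b"
    using mono_onD[OF mono] ab by auto
  ultimately show ?thesis
    unfolding F_def using ab by auto
qed

section \<open>The relaxed Skorokhod problem\<close>

definition mat_abs_sum :: "nat \<Rightarrow> nat \<Rightarrow> (nat \<Rightarrow> nat \<Rightarrow> real) \<Rightarrow> real" where
  "mat_abs_sum d k R = (\<Sum>i<d. \<Sum>j<k. \<bar>R i j\<bar>)"

lemma mat_abs_sum_nonneg: "0 \<le> mat_abs_sum d k R"
  unfolding mat_abs_sum_def by (intro sum_nonneg) auto

lemma abs_le_mat_abs_sum:
  assumes "i < d" "j < k"
  shows "\<bar>R i j\<bar> \<le> mat_abs_sum d k R"
proof -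
  have "\<bar>R i j\<bar> \<le> (\<Sum>j<k. \<bar>R i j\<bar>)"
    by (rule member_le_sum) (use assms in auto)
  also have "\<dots> \<le> mat_abs_sum d k R"
    unfolding mat_abs_sum_def by (rule member_le_sum[where f = "\<lambda>i. \<Sum>j<k. \<bar>R i j\<bar>"]) (use assms in auto)
  finally show ?thesis .
qed

text \<open>\<open>E\<close> plays the role of \<open>Osc x + \<delta>\<close>; the measure condition of the theorem is
  replaced by its only consequence used here, namely that \<open>y\<^sub>j\<close> is constant on every
  interval on which some \<open>w\<^sub>i\<close>, \<open>i \<in> f j\<close>, stays above \<open>\<delta>\<close>.\<close>

locale relaxed_skorokhod =
  fixes d k :: nat and R :: "nat \<Rightarrow> nat \<Rightarrow> real" and f :: "nat \<Rightarrow> nat set"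
    and \<delta> E t1 t2 :: real and w x y :: "real \<Rightarrow> nat \<Rightarrow> real"
  assumes delta_pos: "0 < \<delta>" and delta_le: "\<delta> \<le> E"
    and w_cont: "i < d \<Longrightarrow> continuous_on {t1..t2} (\<lambda>t. w t i)"
    and w_eq: "t \<in> {t1..t2} \<Longrightarrow> i < d \<Longrightarrow> w t i = x t i + (\<Sum>j<k. R i j * y t j)"
    and w_nonneg: "t \<in> {t1..t2} \<Longrightarrow> i < d \<Longrightarrow> 0 \<le> w t i"
    and y_mono: "j < k \<Longrightarrow> mono_on {t1..t2} (\<lambda>t. y t j)"
    and x_diff_le: "u \<in> {t1..t2} \<Longrightarrow> v \<in> {t1..t2} \<Longrightarrow> i < d \<Longrightarrow> \<bar>x u i - x v i\<bar> \<le> E"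
    and y_flat: "j < k \<Longrightarrow> i \<in> f j \<Longrightarrow> t1 \<le> a \<Longrightarrow> a \<le> b \<Longrightarrow> b \<le> t2 \<Longrightarrow>
      (\<And>u. a < u \<Longrightarrow> u < b \<Longrightarrow> \<delta> < w u i) \<Longrightarrow> y b j = y a j"

definition increase_bounded ::
  "nat \<Rightarrow> nat \<Rightarrow> (nat \<Rightarrow> nat \<Rightarrow> real) \<Rightarrow> (nat \<Rightarrow> nat set) \<Rightarrow> nat set \<Rightarrow> real \<Rightarrow> bool" where
  "increase_bounded d k R f I C \<longleftrightarrow>
     (\<forall>\<delta> E t1 t2 w x y s t. relaxed_skorokhod d k R f \<delta> E t1 t2 w x y \<longrightarrow>
        t1 \<le> s \<longrightarrow> s \<le> t \<longrightarrow> t \<le> t2 \<longrightarrow> (\<forall>j<k. j \<notin> J_set k f I \<longrightarrow> y t j = y s j) \<longrightarrow>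
        (\<Sum>j<k. y t j - y s j) \<le> C * E)"

context relaxed_skorokhod
begin

lemma E_pos: "0 < E"
  using delta_pos delta_le by linarith

lemma y_le:
  assumes "j < k" "t1 \<le> s" "s \<le> t" "t \<le> t2"
  shows "y s j \<le> y t j"
  using assms by (intro mono_onD[OF y_mono]) auto

lemma y_eq_between:
  assumes "j < k" "t1 \<le> s" "s \<le> u" "u \<le> v" "v \<le> t" "t \<le> t2" "y t j = y s j"
  shows "y v j = y u j"
  using y_le[of j s u] y_le[of j u v] y_le[of j v t] assms by linarith

lemma w_cont_subinterval:
  assumes "i < d" "t1 \<le> a" "b \<le> t2"
  shows "continuous_on {a..b} (\<lambda>t. w t i)"
  using w_cont[OF \<open>i < d\<close>] by (rule continuous_on_subset) (use assms in auto)

lemma increase_le_if_bounded: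
  assumes "increase_bounded d k R f I C" "t1 \<le> s" "s \<le> t" "t \<le> t2"
    and "\<forall>j<k. j \<notin> J_set k f I \<longrightarrow> y t j = y s j"
  shows "(\<Sum>j<k. y t j - y s j) \<le> C * E"
  using assms relaxed_skorokhod_axioms unfolding increase_bounded_def by blast

lemma w_diff_eq:
  assumes "s \<in> {t1..t2}" "t \<in> {t1..t2}" "i < d"
  shows "w t i - w s i = (x t i - x s i) + (\<Sum>j<k. R i j * (y t j - y s j))"
  using assms by (simp add: w_eq right_diff_distrib sum_subtractf)

lemma w_diff_le:
  assumes "t1 \<le> s" "s \<le> t" "t \<le> t2" "i < d"
  shows "\<bar>w t i - w s i\<bar> \<le> E + mat_abs_sum d k R * (\<Sum>j<k. y t j - y s j)"
proof -
  have "\<bar>\<Sum>j<k. R i j * (y t j - y s j)\<bar> \<le> (\<Sum>j<k. \<bar>R i j * (y t j - y s j)\<bar>)"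
    by (rule sum_abs)
  also have "\<dots> = (\<Sum>j<k. \<bar>R i j\<bar> * (y t j - y s j))"
    using y_le assms by (intro sum.cong) (auto simp: abs_mult)
  also have "\<dots> \<le> (\<Sum>j<k. mat_abs_sum d k R * (y t j - y s j))"
    using abs_le_mat_abs_sum y_le assms by (intro sum_mono mult_right_mono) auto
  finally show ?thesis
    using w_diff_eq[of s t i] x_diff_le[of t s i] assms by (simp add: sum_distrib_left)
qed

lemma increase_le_weighted:
  assumes I: "I \<subseteq> {..<d}" and lam_pos: "\<And>i. i \<in> I \<Longrightarrow> 0 < lam i"
    and lam_R: "\<And>j. j \<in> J_set k f I \<Longrightarrow> 1 \<le> (\<Sum>i\<in>I. lam i * R i j)"
    and st: "t1 \<le> s" "s \<le> t" "t \<le> t2"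
    and frozen: "\<forall>j<k. j \<notin> J_set k f I \<longrightarrow> y t j = y s j"
  shows "(\<Sum>j<k. y t j - y s j) \<le> (\<Sum>i\<in>I. lam i * w t i) + (\<Sum>i\<in>I. lam i) * E"
proof -
  have "(\<Sum>j<k. y t j - y s j) \<le> (\<Sum>j<k. (\<Sum>i\<in>I. lam i * R i j) * (y t j - y s j))"
  proof (rule sum_mono)
    fix j assume j: "j \<in> {..<k}"
    show "y t j - y s j \<le> (\<Sum>i\<in>I. lam i * R i j) * (y t j - y s j)"
    proof (cases "j \<in> J_set k f I")
      case True
      then show ?thesis
        using lam_R[OF True] y_le[of j s t] j st mult_right_mono[of 1 _ "y t j - y s j"] by auto
    qed (use frozen j in auto)
  qed
  also have "\<dots> = (\<Sum>i\<in>I. lam i * (\<Sum>j<k. R i j * (y t j - y s j)))"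
    by (simp add: sum_distrib_left sum_distrib_right sum.swap[of _ I] mult.assoc)
  also have "\<dots> = (\<Sum>i\<in>I. lam i * ((w t i - w s i) - (x t i - x s i)))"
    using I st by (intro sum.cong) (auto simp: w_diff_eq)
  also have "\<dots> = (\<Sum>i\<in>I. lam i * (w t i - w s i)) - (\<Sum>i\<in>I. lam i * (x t i - x s i))"
    by (simp add: right_diff_distrib sum_subtractf)
  also have "\<dots> \<le> (\<Sum>i\<in>I. lam i * w t i) + (\<Sum>i\<in>I. lam i * E)"
  proof -
    have "0 \<le> (\<Sum>i\<in>I. lam i * w s i)"
      using I st lam_pos w_nonneg by (intro sum_nonneg) (simp add: less_imp_le subset_iff)
    moreover have "- (\<Sum>i\<in>I. lam i * (x t i - x s i)) \<le> (\<Sum>i\<in>I. lam i * E)"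
      unfolding sum_negf[symmetric]
    proof (rule sum_mono)
      fix i assume i: "i \<in> I"
      have "- (x t i - x s i) \<le> E"
        using x_diff_le[of t s i] I i st by auto
      then show "- (lam i * (x t i - x s i)) \<le> lam i * E"
        using lam_pos[OF i] mult_left_mono[of "- (x t i - x s i)" E "lam i"] by (simp add: algebra_simps)
    qed
    ultimately show ?thesis
      by (simp add: algebra_simps sum_subtractf)
  qed
  finally show ?thesis
    by (simp add: sum_distrib_right)
qed

lemma increase_le_after_high:
  assumes I: "I \<subseteq> {..<d}" and i: "i \<in> I"
    and at: "t1 \<le> a" "a \<le> t" "t \<le> t2"
    and frozen: "\<forall>j<k. j \<notin> J_set k f I \<longrightarrow> y t j = y a j"
    and bounded: "increase_bounded d k R f (I - {i}) C"
    and high: "(3 + mat_abs_sum d k R * C) * E \<le> w a i"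
  shows "(\<Sum>j<k. y t j - y a j) \<le> C * E"
proof -
  have i_lt: "i < d" using I i by auto
  have stays: "(\<Sum>j<k. y b j - y a j) \<le> C * E \<and> \<delta> < w b i"
    if b: "a \<le> b" "b \<le> t" and above: "\<And>u. a < u \<Longrightarrow> u < b \<Longrightarrow> \<delta> < w u i" for b
  proof -
    have "y b j = y a j" if j: "j < k" "j \<notin> J_set k f (I - {i})" for j
    proof (cases "j \<in> J_set k f I")
      case True
      then have "i \<in> f j" using j unfolding J_set_def by auto
      then show ?thesis using y_flat[of j i a b] above j at b by auto
    next
      case False
      then show ?thesis using y_eq_between[of j a a b t] frozen j at b by auto
    qed
    then have inc: "(\<Sum>j<k. y b j - y a j) \<le> C * E"
      using increase_le_if_bounded[OF bounded, of a b] at b by auto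
    have "\<bar>w b i - w a i\<bar> \<le> E + mat_abs_sum d k R * (\<Sum>j<k. y b j - y a j)"
      using w_diff_le at b i_lt by auto
    moreover have "mat_abs_sum d k R * (\<Sum>j<k. y b j - y a j) \<le> mat_abs_sum d k R * (C * E)"
      using inc mat_abs_sum_nonneg by (rule mult_left_mono)
    ultimately have "2 * E \<le> w b i"
      using high by (simp add: algebra_simps)
    then show ?thesis
      using inc delta_pos delta_le by linarith
  qed
  have "\<delta> < w u i" if u: "u \<in> {a..t}" for u
  proof (rule ccontr)
    assume "\<not> \<delta> < w u i"
    then have "w u i \<le> \<delta>" by simp
    moreover have "continuous_on {a..t} (\<lambda>u. w u i)"
      using w_cont_subinterval i_lt at by simp
    ultimately obtain b where "b \<in> {a..t}" "w b i \<le> \<delta>" "\<forall>u. a < u \<longrightarrow> u < b \<longrightarrow> \<delta> < w u i"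
      using first_hitting_time[of a t "\<lambda>u. w u i", OF _ u] by blast
    then show False
      using stays[of b] by auto
  qed
  then show ?thesis
    using stays[of t] at by auto
qed

lemma increase_le_step:
  assumes I: "I \<subseteq> {..<d}" and lam_pos: "\<And>i. i \<in> I \<Longrightarrow> 0 < lam i"
    and lam_R: "\<And>j. j \<in> J_set k f I \<Longrightarrow> 1 \<le> (\<Sum>i\<in>I. lam i * R i j)"
    and bounded: "\<And>i. i \<in> I \<Longrightarrow> increase_bounded d k R f (I - {i}) C" and "0 \<le> C"
    and st: "t1 \<le> s" "s \<le> t" "t \<le> t2"
    and frozen: "\<forall>j<k. j \<notin> J_set k f I \<longrightarrow> y t j = y s j"
  shows "(\<Sum>j<k. y t j - y s j) \<le> ((\<Sum>i\<in>I. lam i) * (4 + mat_abs_sum d k R * C) + C) * E"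
proof -
  define M where "M = 3 + mat_abs_sum d k R * C"
  have "0 \<le> M"
    unfolding M_def using mat_abs_sum_nonneg \<open>0 \<le> C\<close> by (simp add: add_nonneg_nonneg)
  have "0 \<le> (\<Sum>i\<in>I. lam i)"
    using lam_pos by (simp add: sum_nonneg less_imp_le)
  have "finite I"
    using I finite_subset by blast
  moreover have "continuous_on {s..t} (\<lambda>u. w u i)" if "i \<in> I" for i
    using w_cont_subinterval I that st by auto
  ultimately obtain a where a: "a \<in> {s..t}"
    and before_a: "a = s \<or> (\<forall>i\<in>I. w a i \<le> M * E)" and at_a: "a = t \<or> (\<exists>i\<in>I. M * E \<le> w a i)"
    using crossing_time[of I s t "\<lambda>i u. w u i" "M * E"] st by blast
  have frozen_between: "\<forall>j<k. j \<notin> J_set k f I \<longrightarrow> y v j = y u j" if "s \<le> u" "u \<le> v" "v \<le> t" for u v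
    using y_eq_between[of _ s u v t] frozen st that by auto
  have before: "(\<Sum>j<k. y a j - y s j) \<le> (\<Sum>i\<in>I. lam i) * (M + 1) * E"
    using before_a
  proof
    assume "a = s"
    then show ?thesis
      using \<open>0 \<le> M\<close> \<open>0 \<le> (\<Sum>i\<in>I. lam i)\<close> E_pos by simp
  next
    assume below: "\<forall>i\<in>I. w a i \<le> M * E"
    have "(\<Sum>i\<in>I. lam i * w a i) \<le> (\<Sum>i\<in>I. lam i * (M * E))"
      using below lam_pos by (intro sum_mono mult_left_mono) (auto simp: less_imp_le)
    also have "\<dots> = (\<Sum>i\<in>I. lam i) * M * E"
      by (simp add: sum_distrib_right mult.assoc)
    finally show ?thesis
      using increase_le_weighted[OF I lam_pos lam_R, of s a] a st frozen_between[of s a]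
      by (simp add: sum_distrib_right algebra_simps)
  qed
  have after: "(\<Sum>j<k. y t j - y a j) \<le> C * E"
    using at_a
  proof
    assume "a = t"
    then show ?thesis
      using \<open>0 \<le> C\<close> E_pos by simp
  next
    assume "\<exists>i\<in>I. M * E \<le> w a i"
    then obtain i where "i \<in> I" "M * E \<le> w a i" by blast
    then show ?thesis
      using increase_le_after_high[OF I _ _ _ _ _ bounded] a st frozen_between[of a t]
      unfolding M_def by auto
  qed
  have "(\<Sum>j<k. y t j - y s j) = (\<Sum>j<k. y t j - y a j) + (\<Sum>j<k. y a j - y s j)"
    by (simp add: sum.distrib[symmetric])
  then show ?thesis
    using before after unfolding M_def by (simp add: algebra_simps)
qed

lemma Osc_le_if_bounded:
  assumes bounded: "increase_bounded d k R f {..<d} C" and "0 \<le> C"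
    and f_sub: "\<And>j. j < k \<Longrightarrow> f j \<subseteq> {..<d}"
  shows "Osc y k t1 t2 \<le> C * E \<and> Osc w d t1 t2 \<le> (1 + mat_abs_sum d k R * C) * E"
proof -
  have total: "(\<Sum>j<k. y t j - y s j) \<le> C * E" if st: "t1 \<le> s" "s \<le> t" "t \<le> t2" for s t
    using increase_le_if_bounded[OF bounded st] f_sub unfolding J_set_def by auto
  have "Osc y k t1 t2 \<le> C * E"
  proof (rule Osc_least)
    fix s t l assume st: "t1 \<le> s" "s < t" "t \<le> t2" and l: "l < k"
    have "\<bar>y t l - y s l\<bar> = y t l - y s l"
      using y_le[OF l] st by simp
    also have "\<dots> \<le> (\<Sum>j<k. y t j - y s j)"
      using y_le st l by (intro member_le_sum[where f = "\<lambda>j. y t j - y s j"]) auto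
    also have "\<dots> \<le> C * E"
      using total st by simp
    finally show "\<bar>y t l - y s l\<bar> \<le> C * E" .
  qed (use \<open>0 \<le> C\<close> E_pos in simp)
  moreover have "Osc w d t1 t2 \<le> (1 + mat_abs_sum d k R * C) * E"
  proof (rule Osc_least)
    fix s t l assume st: "t1 \<le> s" "s < t" "t \<le> t2" and l: "l < d"
    have "mat_abs_sum d k R * (\<Sum>j<k. y t j - y s j) \<le> mat_abs_sum d k R * (C * E)"
      using total st mat_abs_sum_nonneg by (intro mult_left_mono) auto
    then show "\<bar>w t l - w s l\<bar> \<le> (1 + mat_abs_sum d k R * C) * E"
      using w_diff_le[of s t l] st l by (simp add: algebra_simps)
  qed (use \<open>0 \<le> C\<close> E_pos mat_abs_sum_nonneg in simp)
  ultimately show ?thesis ..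
qed

end

lemma increase_bounded_mono:
  assumes "increase_bounded d k R f I C" "C \<le> C'"
  shows "increase_bounded d k R f I C'"
  unfolding increase_bounded_def
proof (intro allI impI)
  fix \<delta> E t1 t2 w x y s t
  assume inst: "relaxed_skorokhod d k R f \<delta> E t1 t2 w x y"
    and st: "t1 \<le> s" "s \<le> t" "t \<le> t2" and frozen: "\<forall>j<k. j \<notin> J_set k f I \<longrightarrow> y t j = y s j"
  have "(\<Sum>j<k. y t j - y s j) \<le> C * E"
    using relaxed_skorokhod.increase_le_if_bounded[OF inst assms(1) st frozen] .
  also have "\<dots> \<le> C' * E"
    using relaxed_skorokhod.E_pos[OF inst] assms(2) by simp
  finally show "(\<Sum>j<k. y t j - y s j) \<le> C' * E" .
qed

lemma increase_bounded_exists: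
  assumes f_ne: "\<And>j. j < k \<Longrightarrow> f j \<noteq> {}" and wcs: "weakly_completely_S d k R f"
    and "I \<subseteq> {..<d}"
  shows "\<exists>C\<ge>0. increase_bounded d k R f I C"
  using finite_subset[OF \<open>I \<subseteq> {..<d}\<close> finite_lessThan] \<open>I \<subseteq> {..<d}\<close>
proof (induction I rule: finite_remove_induct)
  case empty
  have "J_set k f {} = {}"
    using f_ne unfolding J_set_def by auto
  then have "increase_bounded d k R f {} 0"
    unfolding increase_bounded_def by auto
  then show ?case by blast
next
  case (remove I)
  have "\<forall>i\<in>I. \<exists>C\<ge>0. increase_bounded d k R f (I - {i}) C"
    using remove.IH remove.prems by blast
  then obtain Ci where Ci: "\<forall>i\<in>I. 0 \<le> Ci i \<and> increase_bounded d k R f (I - {i}) (Ci i)"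
    by (elim bchoice[THEN exE])
  define Cm where "Cm = (\<Sum>i\<in>I. Ci i)"
  have "0 \<le> Cm"
    unfolding Cm_def using Ci by (simp add: sum_nonneg)
  have bounded: "increase_bounded d k R f (I - {i}) Cm" if "i \<in> I" for i
  proof -
    have "Ci i \<le> Cm"
      unfolding Cm_def using Ci remove.hyps(1) that by (intro member_le_sum) auto
    then show ?thesis
      using Ci that increase_bounded_mono by blast
  qed
  obtain lam where lam_pos: "\<And>i. i \<in> I \<Longrightarrow> 0 < lam i"
    and lam_R: "\<And>j. j \<in> J_set k f I \<Longrightarrow> 1 \<le> (\<Sum>i\<in>I. lam i * R i j)"
    using wcs[unfolded weakly_completely_S_def, rule_format, of I] remove.hyps(2) remove.prems
    by blast
  define C where "C = (\<Sum>i\<in>I. lam i) * (4 + mat_abs_sum d k R * Cm) + Cm"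
  have "increase_bounded d k R f I C"
    unfolding increase_bounded_def C_def
    using relaxed_skorokhod.increase_le_step[OF _ remove.prems lam_pos lam_R bounded \<open>0 \<le> Cm\<close>]
    by blast
  moreover have "0 \<le> C"
    unfolding C_def using lam_pos \<open>0 \<le> Cm\<close> mat_abs_sum_nonneg
    by (intro add_nonneg_nonneg mult_nonneg_nonneg) (auto simp: sum_nonneg less_imp_le)
  ultimately show ?case by blast
qed

lemma relaxed_skorokhod_of_LS:
  assumes "0 < \<delta>"
    and "\<forall>i<d. continuous_on {t1..t2} (\<lambda>t. w t i)"
    and x_cont: "\<forall>i<d. continuous_on {t1..t2} (\<lambda>t. x t i)"
    and y_cont: "\<forall>j<k. continuous_on {t1..t2} (\<lambda>t. y t j)"
    and "\<forall>t\<in>{t1..t2}. \<forall>i<d. w t i = x t i + (\<Sum>j<k. R i j * y t j)"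
    and "\<forall>t\<in>{t1..t2}. \<forall>i<d. w t i \<ge> 0"
    and y_LS: "\<forall>j<k. mono_on {t1..t2} (\<lambda>t. y t j) \<and>
         (\<integral>\<^sup>+ s. indicator {s\<in>{t1..t2}. \<exists>i\<in>f j. w s i > \<delta>} s \<partial>LS_measure (\<lambda>t. y t j) t1 t2) = 0"
  shows "relaxed_skorokhod d k R f \<delta> (Osc x d t1 t2 + \<delta>) t1 t2 w x y"
proof unfold_locales
  show "\<delta> \<le> Osc x d t1 t2 + \<delta>"
    using Osc_nonneg[OF x_cont] by simp
  show "\<bar>x u i - x v i\<bar> \<le> Osc x d t1 t2 + \<delta>" if "u \<in> {t1..t2}" "v \<in> {t1..t2}" "i < d" for u v i
    using abs_diff_le_Osc[OF x_cont that] \<open>0 < \<delta>\<close> by simp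
  show "y b j = y a j"
    if "j < k" "i \<in> f j" "t1 \<le> a" "a \<le> b" "b \<le> t2" "\<And>u. a < u \<Longrightarrow> u < b \<Longrightarrow> \<delta> < w u i"
    for j i a b
    by (rule LS_measure_null_imp_eq[where g = "\<lambda>t. y t j" and A = "{s\<in>{t1..t2}. \<exists>i\<in>f j. w s i > \<delta>}"])
      (use that y_cont y_LS in force)+
qed (use assms in auto)

theorem proposition7p1:
  fixes d k :: nat and R :: "nat \<Rightarrow> nat \<Rightarrow> real" and f :: "nat \<Rightarrow> nat set"
  assumes "d \<le> k"
    and "\<And>j. j < k \<Longrightarrow> f j \<subseteq> {..<d}"
    and "\<And>j. j < k \<Longrightarrow> f j \<noteq> {}"
    and "\<And>i j. i < d \<Longrightarrow> j < k \<Longrightarrow> (f j = {i} \<longleftrightarrow> j = i)"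
    and "weakly_completely_S d k R f"
  shows "\<exists>C>0. \<forall>(\<delta>::real) (t1::real) (t2::real) (w::real \<Rightarrow> nat \<Rightarrow> real)
           (x::real \<Rightarrow> nat \<Rightarrow> real) (y::real \<Rightarrow> nat \<Rightarrow> real).
      \<delta> > 0 \<and> 0 \<le> t1 \<and> t1 < t2 \<and>
      (\<forall>i<d. continuous_on {t1..t2} (\<lambda>t. w t i)) \<and>
      (\<forall>i<d. continuous_on {t1..t2} (\<lambda>t. x t i)) \<and>
      (\<forall>j<k. continuous_on {t1..t2} (\<lambda>t. y t j)) \<and>
      (\<forall>t\<in>{t1..t2}. \<forall>i<d. w t i = x t i + (\<Sum>j<k. R i j * y t j)) \<and>
      (\<forall>t\<in>{t1..t2}. \<forall>i<d. w t i \<ge> 0) \<and>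
      (\<forall>j<k. y t1 j \<ge> 0 \<and> mono_on {t1..t2} (\<lambda>t. y t j) \<and>
         (\<integral>\<^sup>+ s. indicator {s\<in>{t1..t2}. \<exists>i\<in>f j. w s i > \<delta>} s
            \<partial>LS_measure (\<lambda>t. y t j) t1 t2) = 0)
      \<longrightarrow> Osc y k t1 t2 \<le> C * (Osc x d t1 t2 + \<delta>) \<and>
          Osc w d t1 t2 \<le> C * (Osc x d t1 t2 + \<delta>)"
proof -
  obtain C0 where "0 \<le> C0" and bounded: "increase_bounded d k R f {..<d} C0"
    using increase_bounded_exists[OF assms(3,5)] by blast
  define C where "C = 1 + (1 + mat_abs_sum d k R) * C0"
  have "0 \<le> mat_abs_sum d k R * C0"
    using \<open>0 \<le> C0\<close> mat_abs_sum_nonneg by simp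
  then have C0_le: "C0 \<le> C" and "1 + mat_abs_sum d k R * C0 \<le> C" and "0 < C"
    unfolding C_def using \<open>0 \<le> C0\<close> by (simp_all add: algebra_simps)
  show ?thesis
  proof (intro exI[of _ C] conjI[OF \<open>0 < C\<close>] allI impI, goal_cases)
    case (1 \<delta> t1 t2 w x y)
    then interpret relaxed_skorokhod d k R f \<delta> "Osc x d t1 t2 + \<delta>" t1 t2 w x y
      by (intro relaxed_skorokhod_of_LS) auto
    have "0 \<le> Osc x d t1 t2 + \<delta>"
      using E_pos by simp
    then show ?case
      using Osc_le_if_bounded[OF bounded \<open>0 \<le> C0\<close> assms(2)]
        mult_right_mono[OF C0_le] mult_right_mono[OF \<open>1 + mat_abs_sum d k R * C0 \<le> C\<close>]
      by fastforce
  qed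
qed

end
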